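(* Let $\mathcal{F}$ be the class of multiplicative functions $f$ from the positive integers to the nonnegative integers such that $f(p^{k-1})\le f(p^k)$ for every prime $p$ and every integer $k\ge 1$. The set of real numbers $\delta$ for which there exists $f\in\mathcal{F}$ such that the set of $f$-practical numbers has asymptotic density $\delta$ is dense in $[0,1]$.
   Context: A function $f$ is multiplicative if $f(1)=1$ and $f(ab)=f(a)f(b)$ whenever $\gcd(a,b)=1$. For such $f$ put $S_f(n)=\sum_{d\mid n} f(d)$. A positive integer $n$ is called $f$-practical if for every positive integer $m\le S_f(n)$ there is a set $\mathcal{D}$ of (distinct) positive divisors of $n$ with $m=\sum_{d\in\mathcal{D}} f(d)$. *)

theory Defs
  imports "HOL-Analysis.Analysis"
begin

(* Functions on the positive integers are modelled as nat => nat; the value at 0 is irrelevant. *)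

definition multiplicative :: "(nat \<Rightarrow> nat) \<Rightarrow> bool" where
  "multiplicative f \<longleftrightarrow> f 1 = 1 \<and>
     (\<forall>a b. a > 0 \<longrightarrow> b > 0 \<longrightarrow> coprime a b \<longrightarrow> f (a * b) = f a * f b)"

definition classF :: "(nat \<Rightarrow> nat) set" where
  "classF = {f. multiplicative f \<and>
     (\<forall>p k. prime p \<longrightarrow> k \<ge> 1 \<longrightarrow> f (p ^ (k - 1)) \<le> f (p ^ k))}"

definition S_f :: "(nat \<Rightarrow> nat) \<Rightarrow> nat \<Rightarrow> nat" where
  "S_f f n = (\<Sum>d\<in>{d. d dvd n}. f d)"

definition f_practical :: "(nat \<Rightarrow> nat) \<Rightarrow> nat \<Rightarrow> bool" where
  "f_practical f n \<longleftrightarrow> n > 0 \<and>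
     (\<forall>m. 0 < m \<and> m \<le> S_f f n \<longrightarrow>
        (\<exists>D. D \<subseteq> {d. d dvd n} \<and> m = (\<Sum>d\<in>D. f d)))"

definition has_density :: "(nat \<Rightarrow> bool) \<Rightarrow> real \<Rightarrow> bool" where
  "has_density P \<delta> \<longleftrightarrow>
     (\<lambda>x. real (card {n. 1 \<le> n \<and> n \<le> x \<and> P n}) / real x) \<longlonglongrightarrow> \<delta>"

end

theory Submission
  imports Defs "HOL-Number_Theory.Number_Theory"
begin

text \<open>For a finite set \<open>Q\<close> of primes, give \<open>n\<close> the weight \<open>3\<^sup>k\<close>, where \<open>k\<close> is the number of
  prime factors of \<open>n\<close> outside \<open>Q\<close>; this weight lies in \<open>classF\<close>. An \<open>n > 1\<close> coprime to every \<open>q \<in> Q\<close> is not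
  practical for it: \<open>2\<close> is at most the total weight, yet every divisor except \<open>1\<close> weighs at
  least \<open>3\<close>. If some \<open>q \<in> Q\<close> divides \<open>n\<close>, adjoining the prime powers outside \<open>Q\<close> one at a
  time preserves the property that every integer up to the total weight is a sum of distinct
  divisor weights. So the practical numbers are \<open>1\<close> and the integers not coprime to \<open>\<Prod>Q\<close>,
  of density \<open>1 - \<Prod>q\<in>Q. 1 - 1/q\<close>. By the Euler product bound for the harmonic numbers, the
  products of \<open>1 - 1/p\<close> over primes \<open>K < p \<le> N\<close> decrease to \<open>0\<close> in steps below \<open>1/K\<close>, so
  they come arbitrarily close to every point of \<open>[0, 1]\<close>.\<close>

definition sum_complete :: "('a \<Rightarrow> nat) \<Rightarrow> 'a set \<Rightarrow> bool" where
  "sum_complete f X \<longleftrightarrow> (\<forall>m \<le> sum f X. \<exists>D\<subseteq>X. sum f D = m)"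

lemma f_practical_iff_sum_complete:
  "f_practical f n \<longleftrightarrow> n > 0 \<and> sum_complete f {d. d dvd n}"
proof -
  have "(\<forall>m. 0 < m \<and> m \<le> S_f f n \<longrightarrow> (\<exists>D. D \<subseteq> {d. d dvd n} \<and> m = sum f D))
      \<longleftrightarrow> sum_complete f {d. d dvd n}"
    unfolding sum_complete_def S_f_def
    by (metis (no_types, lifting) empty_subsetI gr0I sum.empty)
  then show ?thesis unfolding f_practical_def by blast
qed

lemma sum_complete_ones:
  assumes "finite X" "\<And>x. x \<in> X \<Longrightarrow> f x = 1"
  shows "sum_complete f X"
  unfolding sum_complete_def
proof (intro allI impI)
  fix m assume "m \<le> sum f X"
  with assms have "m \<le> card X" by simp
  then obtain D where "D \<subseteq> X" "card D = m" using obtain_subset_with_card_n by metis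
  moreover have "sum f D = card D" using assms \<open>D \<subseteq> X\<close> by (simp add: subset_iff)
  ultimately show "\<exists>D\<subseteq>X. sum f D = m" by auto
qed

text \<open>Write \<open>m = c k + r\<close> with \<open>k\<close> a subset sum of \<open>Z\<close> and \<open>r \<le> sum f X\<close>; this is possible
  because the gaps between consecutive multiples of \<open>c\<close> are at most \<open>sum f X + 1\<close>.\<close>
lemma sum_complete_Un_scaled_image:
  assumes fX: "finite X" and fZ: "finite Z" and cX: "sum_complete f X" and cZ: "sum_complete f Z"
    and inj: "inj_on h Z" and disj: "X \<inter> h ` Z = {}"
    and fh: "\<And>z. z \<in> Z \<Longrightarrow> f (h z) = c * f z" and c: "0 < c" "c \<le> sum f X + 1"
  shows "sum_complete f (X \<union> h ` Z)"
  unfolding sum_complete_def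
proof (intro allI impI)
  fix m assume m: "m \<le> sum f (X \<union> h ` Z)"
  have sum_image: "sum f (h ` E) = c * sum f E" if "E \<subseteq> Z" for E
  proof -
    have "sum f (h ` E) = sum (f \<circ> h) E" using inj that by (intro sum.reindex) (auto intro: inj_on_subset)
    also have "\<dots> = sum (\<lambda>z. c * f z) E" using fh that by (intro sum.cong) auto
    finally show ?thesis by (simp add: sum_distrib_left)
  qed
  have "sum f (X \<union> h ` Z) = sum f X + sum f (h ` Z)" using disj fX fZ by (intro sum.union_disjoint) auto
  with sum_image[of Z] m have m_le: "m \<le> sum f X + c * sum f Z" by simp
  define k where "k = min (sum f Z) (m div c)"
  have "k \<le> sum f Z" unfolding k_def by simp
  then obtain E where E: "E \<subseteq> Z" "sum f E = k" using cZ unfolding sum_complete_def by blast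
  have "c * k \<le> m"
  proof -
    have "c * k \<le> c * (m div c)" unfolding k_def by simp
    also have "\<dots> \<le> m" by simp
    finally show ?thesis .
  qed
  have "m - c * k \<le> sum f X"
  proof (cases "k = m div c")
    case True
    then have "m - c * k = m mod c" by (simp add: minus_mult_div_eq_mod)
    also have "\<dots> < c" using c by simp
    finally show ?thesis using c by simp
  next
    case False
    then show ?thesis using m_le unfolding k_def by (simp add: min_def split: if_splits)
  qed
  then obtain D where D: "D \<subseteq> X" "sum f D = m - c * k" using cX unfolding sum_complete_def by blast
  have "sum f (D \<union> h ` E) = sum f D + sum f (h ` E)"
    using D E disj fX fZ by (intro sum.union_disjoint) (auto intro: finite_subset)
  also have "\<dots> = m" using D E sum_image[OF E(1)] \<open>c * k \<le> m\<close> by simp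
  finally show "\<exists>D\<subseteq>X \<union> h ` Z. sum f D = m" using D E by (intro exI[of _ "D \<union> h ` E"]) auto
qed

definition pow3_outside :: "nat set \<Rightarrow> nat \<Rightarrow> nat" where
  "pow3_outside Q n = 3 ^ card {p \<in> prime_factors n. p \<notin> Q}"

lemma pow3_outside_pos: "pow3_outside Q n > 0"
  unfolding pow3_outside_def by simp

lemma pow3_outside_eq_1: "prime_factors n \<subseteq> Q \<Longrightarrow> pow3_outside Q n = 1"
  unfolding pow3_outside_def by (simp add: subset_iff)

lemma pow3_outside_ge_3:
  assumes "\<not> prime_factors n \<subseteq> Q"
  shows "3 \<le> pow3_outside Q n"
proof -
  have "{p \<in> prime_factors n. p \<notin> Q} \<noteq> {}" using assms by blast
  then have "card {p \<in> prime_factors n. p \<notin> Q} \<ge> 1" by (simp add: Suc_le_eq card_gt_0_iff)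
  then show ?thesis unfolding pow3_outside_def using power_increasing[of 1 _ "3::nat"] by simp
qed

lemma pow3_outside_mult:
  assumes "a > 0" "b > 0" "coprime a b"
  shows "pow3_outside Q (a * b) = pow3_outside Q a * pow3_outside Q b"
proof -
  have "prime_factors (a * b) = prime_factors a \<union> prime_factors b"
    using assms by (intro prime_factors_product) auto
  moreover have "prime_factors a \<inter> prime_factors b = {}"
    using assms(3) by (metis coprime_common_divisor disjoint_iff in_prime_factors_iff not_prime_unit)
  ultimately have "card {p \<in> prime_factors (a * b). p \<notin> Q}
      = card {p \<in> prime_factors a. p \<notin> Q} + card {p \<in> prime_factors b. p \<notin> Q}"
    by (subst card_Un_disjoint[symmetric]) (auto intro: arg_cong[where f = card])
  then show ?thesis unfolding pow3_outside_def by (simp add: power_add)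
qed

lemma pow3_outside_dvd_mono:
  assumes "a dvd b" "b \<noteq> 0"
  shows "pow3_outside Q a \<le> pow3_outside Q b"
proof -
  have "prime_factors a \<subseteq> prime_factors b" using assms by (rule dvd_prime_factors[rotated])
  then have "card {p \<in> prime_factors a. p \<notin> Q} \<le> card {p \<in> prime_factors b. p \<notin> Q}"
    by (intro card_mono) auto
  then show ?thesis unfolding pow3_outside_def by simp
qed

lemma pow3_outside_in_classF: "pow3_outside Q \<in> classF"
  unfolding classF_def multiplicative_def
  by (auto simp: pow3_outside_eq_1 pow3_outside_mult prime_gt_0_nat
      intro!: pow3_outside_dvd_mono le_imp_power_dvd)

lemma pow3_outside_prime_power_mult:
  assumes "prime p" "p \<notin> Q" "k > 0" "d \<noteq> 0" "\<not> p dvd d"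
  shows "pow3_outside Q (p ^ k * d) = 3 * pow3_outside Q d"
proof -
  have "prime_factors (p ^ k * d) = insert p (prime_factors d)"
    using assms by (simp add: prime_factors_product prime_factors_power prime_prime_factors)
  moreover have "p \<notin> prime_factors d" using assms by auto
  ultimately have "{q \<in> prime_factors (p ^ k * d). q \<notin> Q} = insert p {q \<in> prime_factors d. q \<notin> Q}"
    "p \<notin> {q \<in> prime_factors d. q \<notin> Q}"
    using assms by auto
  then show ?thesis unfolding pow3_outside_def by simp
qed

lemma divisors_prime_power_Suc_mult:
  fixes p m :: nat
  assumes "prime p" "\<not> p dvd m"
  shows "{d. d dvd p ^ Suc k * m} = {d. d dvd p ^ k * m} \<union> (\<lambda>d. p ^ Suc k * d) ` {d. d dvd m}"
    and "{d. d dvd p ^ k * m} \<inter> (\<lambda>d. p ^ Suc k * d) ` {d. d dvd m} = {}"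
proof -
  show "{d. d dvd p ^ Suc k * m} = {d. d dvd p ^ k * m} \<union> (\<lambda>d. p ^ Suc k * d) ` {d. d dvd m}"
  proof (intro equalityI subsetI)
    fix d assume "d \<in> {d. d dvd p ^ Suc k * m}"
    then obtain b c where bc: "d = b * c" "b dvd p ^ Suc k" "c dvd m"
      using division_decomp[of d "p ^ Suc k" m] by auto
    then obtain i where i: "i \<le> Suc k" "b = p ^ i" using divides_primepow_nat assms by blast
    show "d \<in> {d. d dvd p ^ k * m} \<union> (\<lambda>d. p ^ Suc k * d) ` {d. d dvd m}"
    proof (cases "i = Suc k")
      case True
      then show ?thesis using bc i by blast
    next
      case False
      then have "b dvd p ^ k" using i by (simp add: le_imp_power_dvd)
      then show ?thesis using bc by (simp add: mult_dvd_mono)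
    qed
  next
    fix d assume "d \<in> {d. d dvd p ^ k * m} \<union> (\<lambda>d. p ^ Suc k * d) ` {d. d dvd m}"
    moreover have "p ^ k * m dvd p ^ Suc k * m" by (simp add: le_imp_power_dvd)
    ultimately show "d \<in> {d. d dvd p ^ Suc k * m}"
      by (auto intro: dvd_trans mult_dvd_mono)
  qed
  show "{d. d dvd p ^ k * m} \<inter> (\<lambda>d. p ^ Suc k * d) ` {d. d dvd m} = {}"
  proof (rule ccontr)
    assume "\<not> ?thesis"
    then obtain e where "p ^ Suc k * e dvd p ^ k * m" by blast
    then have "p ^ Suc k dvd p ^ k * m" using dvd_mult_left by blast
    moreover have "coprime (p ^ Suc k) m"
      using assms by (simp add: prime_imp_coprime)
    ultimately have "p ^ Suc k dvd p ^ k" using coprime_dvd_mult_left_iff by blast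
    then show False using assms prime_gt_1_nat by (simp add: dvd_power_iff_le)
  qed
qed

lemma sum_complete_divisors_prime_power_mult:
  assumes p: "prime p" "p \<notin> Q" "\<not> p dvd m" and "m > 1"
    and complete: "sum_complete (pow3_outside Q) {d. d dvd m}"
  shows "sum_complete (pow3_outside Q) {d. d dvd p ^ k * m}"
proof (induction k)
  case 0
  then show ?case using complete by simp
next
  case (Suc k)
  let ?X = "{d. d dvd p ^ k * m}" and ?Z = "{d. d dvd m}"
  have "sum_complete (pow3_outside Q) (?X \<union> (\<lambda>d. p ^ Suc k * d) ` ?Z)"
  proof (rule sum_complete_Un_scaled_image[where c = 3])
    show "finite ?X" "finite ?Z" using \<open>m > 1\<close> p by (simp_all add: prime_gt_0_nat)
    show "inj_on (\<lambda>d. p ^ Suc k * d) ?Z" using p by (intro inj_onI) (auto simp: prime_gt_0_nat)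
    show "?X \<inter> (\<lambda>d. p ^ Suc k * d) ` ?Z = {}" by (rule divisors_prime_power_Suc_mult(2)[OF p(1,3)])
    show "pow3_outside Q (p ^ Suc k * d) = 3 * pow3_outside Q d" if "d \<in> ?Z" for d
      using that p \<open>m > 1\<close> by (intro pow3_outside_prime_power_mult) (auto dest: dvd_trans intro!: gr0I)
    have "{1, m} \<subseteq> ?X" by auto
    then have "sum (pow3_outside Q) {1, m} \<le> sum (pow3_outside Q) ?X"
      using \<open>finite ?X\<close> by (intro sum_mono2) auto
    moreover have "sum (pow3_outside Q) {1, m} \<ge> 2"
      using \<open>m > 1\<close> pow3_outside_pos[of Q 1] pow3_outside_pos[of Q m] by simp
    ultimately show "3 \<le> sum (pow3_outside Q) ?X + 1" by simp
  qed (use Suc.IH complete in simp_all)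
  then show ?case using divisors_prime_power_Suc_mult(1)[OF p(1,3)] by simp
qed

text \<open>Peel off the prime factors outside \<open>Q\<close> one at a time: each multiplies the weights of the
  new divisors by \<open>3\<close>, and the divisors already present sum to at least \<open>2\<close> because some
  \<open>q \<in> Q\<close> is among them.\<close>
lemma sum_complete_divisors_pow3_outside:
  assumes Q: "\<forall>q\<in>Q. prime q" and "n > 0" "\<exists>q\<in>Q. q dvd n"
  shows "sum_complete (pow3_outside Q) {d. d dvd n}"
  using assms(2,3)
proof (induction n rule: less_induct)
  case (less n)
  show ?case
  proof (cases "prime_factors n \<subseteq> Q")
    case True
    have "prime_factors d \<subseteq> Q" if "d dvd n" for d
      using True that less.prems dvd_prime_factors by blast
    then show ?thesis using less.prems by (intro sum_complete_ones) (auto simp: pow3_outside_eq_1)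
  next
    case False
    then obtain p where p: "prime p" "p dvd n" "p \<notin> Q" by auto
    have "n \<noteq> 0" "\<not> is_unit p" using p less.prems by (auto simp: not_prime_unit)
    then obtain m where n: "n = p ^ multiplicity p n * m" and "\<not> p dvd m"
      by (rule multiplicity_decompose')
    have "multiplicity p n > 0" using p less.prems by (simp add: prime_multiplicity_gt_zero_iff)
    then have "p ^ multiplicity p n > 1" using prime_gt_1_nat[OF p(1)] by (intro one_less_power) auto
    moreover have "m > 0" using n less.prems by (intro gr0I) auto
    ultimately have "m < n" using mult_less_mono1[of 1 "p ^ multiplicity p n" m] n by simp
    obtain q where q: "q \<in> Q" "q dvd n" and "prime q" using less.prems Q by blast
    have "\<not> q dvd p ^ multiplicity p n"
      using q p \<open>prime q\<close> by (metis prime_dvd_power primes_dvd_imp_eq)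
    then have "q dvd m" using q n \<open>prime q\<close> prime_dvd_mult_iff by metis
    then have "m > 1" using dvd_imp_le[OF _ \<open>m > 0\<close>] prime_gt_1_nat[OF \<open>prime q\<close>] by fastforce
    have "sum_complete (pow3_outside Q) {d. d dvd m}"
      using less.IH[OF \<open>m < n\<close> \<open>m > 0\<close>] q \<open>q dvd m\<close> by blast
    then have "sum_complete (pow3_outside Q) {d. d dvd p ^ multiplicity p n * m}"
      by (rule sum_complete_divisors_prime_power_mult[OF p(1,3) \<open>\<not> p dvd m\<close> \<open>m > 1\<close>])
    then show ?thesis using n by simp
  qed
qed

lemma not_f_practical_pow3_outside:
  assumes "n > 1" "\<forall>q\<in>Q. \<not> q dvd n"
  shows "\<not> f_practical (pow3_outside Q) n"
proof
  assume "f_practical (pow3_outside Q) n"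
  then have complete: "sum_complete (pow3_outside Q) {d. d dvd n}"
    using f_practical_iff_sum_complete by blast
  have heavy: "pow3_outside Q d \<ge> 3" if "d dvd n" "d \<noteq> 1" for d
  proof (rule pow3_outside_ge_3)
    obtain p where p: "prime p" "p dvd d" using \<open>d \<noteq> 1\<close> prime_factor_nat by blast
    moreover have "d \<noteq> 0" using that assms by (auto intro!: gr0I)
    ultimately have "p \<in> prime_factors d" by (simp add: in_prime_factors_iff)
    moreover have "p \<notin> Q" using assms p that dvd_trans by blast
    ultimately show "\<not> prime_factors d \<subseteq> Q" by blast
  qed
  have fin: "finite {d. d dvd n}" using assms by simp
  have "sum (pow3_outside Q) {1, n} \<le> sum (pow3_outside Q) {d. d dvd n}"
    using fin by (intro sum_mono2) auto
  moreover have "sum (pow3_outside Q) {1, n} \<ge> 2"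
    using assms pow3_outside_pos[of Q 1] pow3_outside_pos[of Q n] by simp
  ultimately have "2 \<le> sum (pow3_outside Q) {d. d dvd n}" by linarith
  then obtain D where D: "D \<subseteq> {d. d dvd n}" "sum (pow3_outside Q) D = 2"
    using complete unfolding sum_complete_def by blast
  show False
  proof (cases "D \<subseteq> {1}")
    case True
    then have "D = {} \<or> D = {1}" by blast
    then show False using D by (auto simp: pow3_outside_eq_1)
  next
    case False
    then obtain d where d: "d \<in> D" "d \<noteq> 1" by blast
    have "pow3_outside Q d \<le> sum (pow3_outside Q) D"
      using d finite_subset[OF D(1) fin] by (intro member_le_sum) auto
    moreover have "pow3_outside Q d \<ge> 3" using heavy d D(1) by blast
    ultimately show False using D(2) by linarith
  qed
qed

lemma f_practical_pow3_outside_iff: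
  assumes "\<forall>q\<in>Q. prime q"
  shows "f_practical (pow3_outside Q) n \<longleftrightarrow> n > 0 \<and> (n = 1 \<or> (\<exists>q\<in>Q. q dvd n))"
proof
  assume "f_practical (pow3_outside Q) n"
  then show "n > 0 \<and> (n = 1 \<or> (\<exists>q\<in>Q. q dvd n))"
    using not_f_practical_pow3_outside[of n Q] unfolding f_practical_def by (cases "n = 1") auto
next
  assume n: "n > 0 \<and> (n = 1 \<or> (\<exists>q\<in>Q. q dvd n))"
  have "sum_complete (pow3_outside Q) {d. d dvd n}"
  proof (cases "n = 1")
    case True
    then show ?thesis by (intro sum_complete_ones) (auto simp: pow3_outside_eq_1)
  qed (use n assms sum_complete_divisors_pow3_outside in blast)
  then show "f_practical (pow3_outside Q) n" using n f_practical_iff_sum_complete by blast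
qed

definition counting :: "(nat \<Rightarrow> bool) \<Rightarrow> nat \<Rightarrow> nat" where
  "counting P x = card {n. 1 \<le> n \<and> n \<le> x \<and> P n}"

lemma has_density_iff_counting:
  "has_density P \<delta> \<longleftrightarrow> (\<lambda>x. real (counting P x) / real x) \<longlonglongrightarrow> \<delta>"
  unfolding has_density_def counting_def ..

lemma finite_counting_set [simp]: "finite {n. 1 \<le> n \<and> n \<le> (x::nat) \<and> P n}"
  by (rule finite_subset[of _ "{..x}"]) auto

lemma counting_mono: "x \<le> y \<Longrightarrow> counting P x \<le> counting P y"
  unfolding counting_def by (intro card_mono) auto

lemma counting_Not: "counting (\<lambda>n. \<not> P n) x = x - counting P x"
proof -
  have "{n. 1 \<le> n \<and> n \<le> x \<and> \<not> P n} = {1..x} - {n. 1 \<le> n \<and> n \<le> x \<and> P n}" by auto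
  then show ?thesis unfolding counting_def by (simp add: card_Diff_subset subset_iff)
qed

lemma counting_le: "counting P x \<le> x"
proof -
  have "counting P x \<le> card {1..x}" unfolding counting_def by (intro card_mono) auto
  then show ?thesis by simp
qed

lemma counting_periodic_mult:
  assumes periodic: "\<And>n. P (n + M) = P n"
  shows "counting P (q * M) = q * counting P M"
proof (induction q)
  case (Suc q)
  have shift: "P (k + q * M) = P k" for k
  proof (induction q)
    case (Suc q)
    then show ?case using periodic[of "k + q * M"] by (simp add: algebra_simps)
  qed simp
  have "{n. 1 \<le> n \<and> n \<le> Suc q * M \<and> P n}
      = {n. 1 \<le> n \<and> n \<le> q * M \<and> P n} \<union> (\<lambda>k. k + q * M) ` {n. 1 \<le> n \<and> n \<le> M \<and> P n}"
  proof (intro equalityI subsetI)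
    fix n assume n: "n \<in> {n. 1 \<le> n \<and> n \<le> Suc q * M \<and> P n}"
    show "n \<in> {n. 1 \<le> n \<and> n \<le> q * M \<and> P n} \<union> (\<lambda>k. k + q * M) ` {n. 1 \<le> n \<and> n \<le> M \<and> P n}"
    proof (cases "n \<le> q * M")
      case False
      then have "n = (n - q * M) + q * M" "P (n - q * M)" using n shift[of "n - q * M"] by auto
      then show ?thesis using n False by (intro UnI2 image_eqI[where x = "n - q * M"]) auto
    qed (use n in auto)
  qed (auto simp: shift)
  moreover have "{n. 1 \<le> n \<and> n \<le> q * M \<and> P n} \<inter> (\<lambda>k. k + q * M) ` {n. 1 \<le> n \<and> n \<le> M \<and> P n} = {}"
    by auto
  moreover have "card ((\<lambda>k. k + q * M) ` {n. 1 \<le> n \<and> n \<le> M \<and> P n}) = counting P M"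
    unfolding counting_def by (intro card_image) (auto simp: inj_on_def)
  ultimately show ?case using Suc.IH unfolding counting_def by (simp add: card_Un_disjoint)
qed (simp add: counting_def)

lemma ratio_close_of_sandwich:
  fixes c t q x M :: real
  assumes x: "q * M \<le> x" "x \<le> (q + 1) * M" and c: "q * t \<le> c" "c \<le> (q + 1) * t"
    and "t \<ge> 0" "x > 0" "M > 0"
  shows "\<bar>c / x - t / M\<bar> \<le> t / x"
proof -
  have "c * M \<le> t * x + t * M"
  proof -
    have "c * M \<le> (q + 1) * t * M" using c(2) \<open>M > 0\<close> by (intro mult_right_mono) auto
    moreover have "t * (q * M) \<le> t * x" using x(1) \<open>t \<ge> 0\<close> by (intro mult_left_mono)
    ultimately show ?thesis by (simp add: algebra_simps)
  qed
  moreover have "t * x \<le> c * M + t * M"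
  proof -
    have "q * t * M \<le> c * M" using c(1) \<open>M > 0\<close> by (intro mult_right_mono) auto
    moreover have "t * x \<le> t * ((q + 1) * M)" using x(2) \<open>t \<ge> 0\<close> by (intro mult_left_mono)
    ultimately show ?thesis by (simp add: algebra_simps)
  qed
  ultimately have "\<bar>c * M - t * x\<bar> \<le> t * M" by linarith
  then show ?thesis using \<open>x > 0\<close> \<open>M > 0\<close> by (simp add: field_simps abs_div)
qed

lemma has_density_periodic:
  assumes "M > 0" and periodic: "\<And>n. P (n + M) = P n"
  shows "has_density P (real (counting P M) / real M)"
proof -
  define t where "t = real (counting P M)"
  have bound: "\<bar>real (counting P x) / real x - t / real M\<bar> \<le> t / real x" if "x > 0" for x
  proof (rule ratio_close_of_sandwich)
    define q where "q = x div M"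
    have "q * M \<le> x" "x < (q + 1) * M"
      using \<open>M > 0\<close> unfolding q_def by (simp_all add: dividend_less_div_times)
    then have "real (q * M) \<le> real x" "real x \<le> real ((q + 1) * M)"
      by (simp_all only: of_nat_le_iff)
    then show "real q * real M \<le> real x" "real x \<le> (real q + 1) * real M"
      by (simp_all add: algebra_simps)
    have "counting P (q * M) \<le> counting P x" "counting P x \<le> counting P ((q + 1) * M)"
      using \<open>q * M \<le> x\<close> \<open>x < (q + 1) * M\<close> by (simp_all add: counting_mono)
    then have "real (q * counting P M) \<le> real (counting P x)"
      "real (counting P x) \<le> real ((q + 1) * counting P M)"
      unfolding counting_periodic_mult[where P = P and M = M, OF periodic]
      by (simp_all only: of_nat_le_iff)
    then show "real q * t \<le> real (counting P x)" "real (counting P x) \<le> (real q + 1) * t"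
      unfolding t_def by (simp_all add: algebra_simps)
  qed (use \<open>M > 0\<close> that in \<open>simp_all add: t_def\<close>)
  have "(\<lambda>x. real (counting P x) / real x - t / real M) \<longlonglongrightarrow> 0"
  proof (rule Lim_null_comparison)
    show "\<forall>\<^sub>F x in sequentially. norm (real (counting P x) / real x - t / real M) \<le> t / real x"
      using bound by (intro eventually_sequentiallyI[of 1]) auto
    show "(\<lambda>x. t / real x) \<longlonglongrightarrow> 0"
      using tendsto_mult_right_zero[OF lim_inverse_n', of t] by simp
  qed
  then show ?thesis unfolding has_density_iff_counting t_def by (simp add: LIM_zero_iff)
qed

lemma has_density_Not:
  assumes "has_density P \<delta>"
  shows "has_density (\<lambda>n. \<not> P n) (1 - \<delta>)"
proof -
  have "(\<lambda>x. 1 - real (counting P x) / real x) \<longlonglongrightarrow> 1 - \<delta>"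
    using assms unfolding has_density_iff_counting by (intro tendsto_intros)
  moreover have "\<forall>\<^sub>F x in sequentially.
      1 - real (counting P x) / real x = real (counting (\<lambda>n. \<not> P n) x) / real x"
    using counting_le[of P] by (intro eventually_sequentiallyI[of 1])
      (simp add: counting_Not of_nat_diff field_simps)
  ultimately show ?thesis unfolding has_density_iff_counting
    by (rule Lim_transform_eventually)
qed

lemma counting_le_counting_add:
  assumes "finite E" "{n. R n \<noteq> R' n} \<subseteq> E"
  shows "counting R x \<le> counting R' x + card E"
proof -
  have "counting R x \<le> card ({n. 1 \<le> n \<and> n \<le> x \<and> R' n} \<union> E)"
    unfolding counting_def using assms by (intro card_mono) auto
  also have "\<dots> \<le> counting R' x + card E" unfolding counting_def by (rule card_Un_le)
  finally show ?thesis .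
qed

lemma has_density_cong_finite:
  assumes "has_density P \<delta>" and fin: "finite {n. P n \<noteq> P' n}"
  shows "has_density P' \<delta>"
proof -
  define e where "e = card {n. P n \<noteq> P' n}"
  have "\<bar>real (counting P' x) / real x - real (counting P x) / real x\<bar> \<le> real e / real x" for x
  proof -
    have "counting P' x \<le> counting P x + e" "counting P x \<le> counting P' x + e"
      unfolding e_def using fin by (auto intro!: counting_le_counting_add)
    then have "\<bar>real (counting P' x) - real (counting P x)\<bar> \<le> real e" by linarith
    then show ?thesis by (simp add: diff_divide_distrib[symmetric] abs_div divide_right_mono)
  qed
  then have "(\<lambda>x. real (counting P' x) / real x - real (counting P x) / real x) \<longlonglongrightarrow> 0"
    by (intro Lim_null_comparison[OF _ tendsto_mult_right_zero[OF lim_inverse_n', of "real e"]])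
       (auto simp: divide_inverse)
  then have "(\<lambda>x. (real (counting P' x) / real x - real (counting P x) / real x)
      + real (counting P x) / real x) \<longlonglongrightarrow> 0 + \<delta>"
    using assms(1) unfolding has_density_iff_counting by (rule tendsto_add)
  then show ?thesis unfolding has_density_iff_counting by simp
qed

lemma coprime_prod_primes_iff:
  fixes n :: nat
  assumes "finite Q" "\<forall>q\<in>Q. prime q"
  shows "coprime n (\<Prod>Q) \<longleftrightarrow> (\<forall>q\<in>Q. \<not> q dvd n)"
proof
  assume "coprime n (\<Prod>Q)"
  then show "\<forall>q\<in>Q. \<not> q dvd n"
    using assms by (metis coprime_common_divisor dvd_prodI not_prime_unit)
next
  assume "\<forall>q\<in>Q. \<not> q dvd n"
  then show "coprime n (\<Prod>Q)"
    using assms by (auto intro!: prod_coprime_right simp: coprime_commute prime_imp_coprime)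
qed

lemma has_density_coprime:
  assumes "M > 0"
  shows "has_density (\<lambda>n. coprime n M) (real (totient M) / real M)"
proof -
  have "{n. 1 \<le> n \<and> n \<le> M \<and> coprime n M} = totatives M"
    unfolding totatives_def by force
  then have "counting (\<lambda>n. coprime n M) M = totient M"
    unfolding counting_def totient_def by (rule arg_cong)
  moreover have "coprime (n + M) M \<longleftrightarrow> coprime n M" for n
    by (simp only: coprime_iff_gcd_eq_1 gcd_add1)
  ultimately show ?thesis
    using has_density_periodic[OF assms, of "\<lambda>n. coprime n M"] by simp
qed

lemma has_density_f_practical_pow3_outside:
  assumes Q: "finite Q" "\<forall>q\<in>Q. prime q"
  shows "has_density (f_practical (pow3_outside Q)) (1 - (\<Prod>q\<in>Q. 1 - 1 / real q))"
proof -
  define M where "M = \<Prod>Q"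
  have "M > 0" unfolding M_def using Q by (simp add: prime_gt_0_nat)
  have "prime_factors M = Q"
    unfolding M_def using Q by (subst prime_factors_prod) (auto simp: prime_prime_factors)
  then have "real (totient M) / real M = (\<Prod>q\<in>Q. 1 - 1 / real q)"
    using \<open>M > 0\<close> by (simp add: totient_formula2)
  then have "has_density (\<lambda>n. \<not> coprime n M) (1 - (\<Prod>q\<in>Q. 1 - 1 / real q))"
    using has_density_Not[OF has_density_coprime[OF \<open>M > 0\<close>]] by simp
  moreover have "{n. (\<not> coprime n M) \<noteq> f_practical (pow3_outside Q) n} \<subseteq> {0, 1}"
    using f_practical_pow3_outside_iff[OF Q(2)] coprime_prod_primes_iff[OF Q] unfolding M_def
    by auto
  then have "finite {n. (\<not> coprime n M) \<noteq> f_practical (pow3_outside Q) n}"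
    by (rule finite_subset) simp
  ultimately show ?thesis by (rule has_density_cong_finite)
qed

lemma multiplicity_less_self:
  assumes "prime p" "n > 0"
  shows "multiplicity p n < n"
proof -
  have "multiplicity p n < 2 ^ multiplicity p n" by (rule less_exp)
  also have "\<dots> \<le> p ^ multiplicity p n" using prime_ge_2_nat[OF assms(1)] by (rule power_mono) simp
  also have "\<dots> \<le> n" using assms by (intro dvd_imp_le multiplicity_dvd)
  finally show ?thesis .
qed

lemma inverse_eq_prod_multiplicity:
  fixes n :: nat
  assumes "n > 0" "finite PS" "\<forall>p\<in>PS. prime p" "prime_factors n \<subseteq> PS"
  shows "1 / real n = (\<Prod>p\<in>PS. (1 / real p) ^ multiplicity p n)"
proof -
  have "(\<Prod>p\<in>PS. (1 / real p) ^ multiplicity p n)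
      = (\<Prod>p\<in>prime_factors n. (1 / real p) ^ multiplicity p n)"
    using assms by (intro prod.mono_neutral_right)
      (auto simp: in_prime_factors_iff not_dvd_imp_multiplicity_0)
  also have "\<dots> = 1 / real (\<Prod>p\<in>prime_factors n. p ^ multiplicity p n)"
    by (simp add: power_one_over prod_dividef)
  also have "(\<Prod>p\<in>prime_factors n. p ^ multiplicity p n) = n"
    using assms(1) by (intro prime_factorization_nat[symmetric]) simp
  finally show ?thesis ..
qed

lemma geometric_sum_le:
  fixes x :: real
  assumes "0 \<le> x" "x < 1"
  shows "(\<Sum>k\<le>N. x ^ k) \<le> 1 / (1 - x)"
proof -
  have "(\<Sum>k\<le>N. x ^ k) \<le> (\<Sum>k. x ^ k)"
    using assms by (intro sum_le_suminf) auto
  then show ?thesis using assms by (simp add: suminf_geometric)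
qed

text \<open>Expanding the Euler product into sums over exponent vectors \<open>g\<close>, every \<open>n \<le> N\<close> appears
  as the term with \<open>g p = multiplicity p n\<close>.\<close>
lemma harm_le_euler_product:
  "harm N \<le> (\<Prod>p | prime p \<and> p \<le> N. 1 / (1 - 1 / real p))"
proof -
  define PS where "PS = {p. prime p \<and> p \<le> N}"
  have PS: "finite PS" "\<forall>p\<in>PS. prime p" unfolding PS_def by auto
  define F where "F g = (\<Prod>p\<in>PS. (1 / real p) ^ g p)" for g :: "nat \<Rightarrow> nat"
  define h where "h n = restrict (\<lambda>p. multiplicity p n) PS" for n
  have F_h: "F (h n) = 1 / real n" if "n \<in> {1..N}" for n
  proof -
    have "prime_factors n \<subseteq> PS"
    proof
      fix p assume "p \<in> prime_factors n"
      then have "prime p" "p dvd n" by auto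
      then show "p \<in> PS" using that dvd_imp_le[of p n] unfolding PS_def by auto
    qed
    have "F (h n) = (\<Prod>p\<in>PS. (1 / real p) ^ multiplicity p n)"
      unfolding F_def h_def by (intro prod.cong) auto
    also have "\<dots> = 1 / real n"
      using that PS \<open>prime_factors n \<subseteq> PS\<close> by (intro inverse_eq_prod_multiplicity[symmetric]) auto
    finally show ?thesis .
  qed
  have "inj_on h {1..N}"
  proof (rule inj_onI)
    fix a b assume ab: "a \<in> {1..N}" "b \<in> {1..N}" "h a = h b"
    show "a = b"
    proof (rule multiplicity_eq_nat)
      fix p :: nat assume "prime p"
      show "multiplicity p a = multiplicity p b"
      proof (cases "p \<in> PS")
        case True
        then show ?thesis using fun_cong[OF ab(3), of p] unfolding h_def by simp
      next
        case False
        then have "\<not> p dvd a" "\<not> p dvd b"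
          using \<open>prime p\<close> ab dvd_imp_le[of p a] dvd_imp_le[of p b] unfolding PS_def by auto
        then show ?thesis by (simp add: not_dvd_imp_multiplicity_0)
      qed
    qed (use ab in auto)
  qed
  have image: "h ` {1..N} \<subseteq> PiE PS (\<lambda>_. {..N})"
  proof (rule image_subsetI)
    fix n assume "n \<in> {1..N}"
    then have "multiplicity p n \<le> N" if "p \<in> PS" for p
      using multiplicity_less_self[of p n] PS(2) that by fastforce
    then show "h n \<in> PiE PS (\<lambda>_. {..N})" unfolding h_def by (simp add: restrict_PiE_iff)
  qed
  have "harm N = (\<Sum>n\<in>{1..N}. 1 / real n)" unfolding harm_def by (simp add: divide_inverse)
  also have "\<dots> = (\<Sum>n\<in>{1..N}. F (h n))" using F_h by simp
  also have "\<dots> = (\<Sum>g\<in>h ` {1..N}. F g)" using \<open>inj_on h {1..N}\<close> by (simp add: sum.reindex)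
  also have "\<dots> \<le> (\<Sum>g\<in>PiE PS (\<lambda>_. {..N}). F g)"
    using PS image unfolding F_def by (intro sum_mono2 finite_PiE prod_nonneg) auto
  also have "\<dots> = (\<Prod>p\<in>PS. \<Sum>k\<le>N. (1 / real p) ^ k)"
    unfolding F_def using PS by (intro prod_sum_PiE[symmetric]) auto
  also have "\<dots> \<le> (\<Prod>p\<in>PS. 1 / (1 - 1 / real p))"
  proof (rule prod_mono)
    fix p assume "p \<in> PS"
    then have "real p \<ge> 2" using PS(2) prime_ge_2_nat by fastforce
    then show "0 \<le> (\<Sum>k\<le>N. (1 / real p) ^ k) \<and> (\<Sum>k\<le>N. (1 / real p) ^ k) \<le> 1 / (1 - 1 / real p)"
      by (intro conjI sum_nonneg geometric_sum_le) auto
  qed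
  finally show ?thesis unfolding PS_def .
qed
lemma one_minus_inverse_prime_bounds:
  assumes "prime p"
  shows "0 < 1 - 1 / real p" "1 - 1 / real p \<le> 1"
proof -
  have "real p \<ge> 2" using prime_ge_2_nat[OF assms] by simp
  then show "0 < 1 - 1 / real p" "1 - 1 / real p \<le> 1" by (simp_all add: field_simps)
qed

lemma prod_primes_upto_tendsto_0:
  "(\<lambda>N. \<Prod>p | prime p \<and> p \<le> N. 1 - 1 / real p) \<longlonglongrightarrow> 0"
proof (rule tendsto_sandwich[where f = "\<lambda>_. 0" and h = "\<lambda>N. 1 / harm N"])
  show "\<forall>\<^sub>F N in sequentially. 0 \<le> (\<Prod>p | prime p \<and> p \<le> N. 1 - 1 / real p)"
    using one_minus_inverse_prime_bounds by (intro always_eventually allI prod_nonneg) (simp add: less_imp_le)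
  show "\<forall>\<^sub>F N in sequentially. (\<Prod>p | prime p \<and> p \<le> N. 1 - 1 / real p) \<le> 1 / harm N"
  proof (rule eventually_sequentiallyI[of 1])
    fix N :: nat assume "N \<ge> 1"
    define P where "P = (\<Prod>p | prime p \<and> p \<le> N. 1 - 1 / real p)"
    have "P > 0" unfolding P_def using one_minus_inverse_prime_bounds by (intro prod_pos) auto
    have "harm N \<le> 1 / P"
      using harm_le_euler_product[of N] unfolding P_def by (simp add: prod_dividef)
    then show "P \<le> 1 / harm N"
      using \<open>P > 0\<close> harm_pos[of N] \<open>N \<ge> 1\<close> by (simp add: field_simps)
  qed
  show "(\<lambda>N. 1 / harm N :: real) \<longlonglongrightarrow> 0"
    using tendsto_inverse_0_at_top[OF harm_at_top] by (simp add: divide_inverse)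
qed simp

lemma prod_primes_between_tendsto_0:
  "(\<lambda>N. \<Prod>p | prime p \<and> K < p \<and> p \<le> N. 1 - 1 / real p) \<longlonglongrightarrow> 0"
proof -
  define c where "c = (\<Prod>p | prime p \<and> p \<le> K. 1 - 1 / real p)"
  have "c > 0" unfolding c_def using one_minus_inverse_prime_bounds by (intro prod_pos) auto
  have "(\<Prod>p | prime p \<and> p \<le> N. 1 - 1 / real p) = c * (\<Prod>p | prime p \<and> K < p \<and> p \<le> N. 1 - 1 / real p)"
    if "K \<le> N" for N
  proof -
    have "{p. prime p \<and> p \<le> N} = {p. prime p \<and> p \<le> K} \<union> {p. prime p \<and> K < p \<and> p \<le> N}"
      using that by auto
    moreover have "(\<Prod>p\<in>{p. prime p \<and> p \<le> K} \<union> {p. prime p \<and> K < p \<and> p \<le> N}. 1 - 1 / real p)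
        = c * (\<Prod>p | prime p \<and> K < p \<and> p \<le> N. 1 - 1 / real p)"
      unfolding c_def by (rule prod.union_disjoint) auto
    ultimately show ?thesis by simp
  qed
  then have "\<forall>\<^sub>F N in sequentially. (\<Prod>p | prime p \<and> p \<le> N. 1 - 1 / real p) / c
      = (\<Prod>p | prime p \<and> K < p \<and> p \<le> N. 1 - 1 / real p)"
    using \<open>c > 0\<close> by (intro eventually_sequentiallyI[of K]) simp
  moreover have "(\<lambda>N. (\<Prod>p | prime p \<and> p \<le> N. 1 - 1 / real p) / c) \<longlonglongrightarrow> 0"
    using tendsto_divide_zero[OF prod_primes_upto_tendsto_0] .
  ultimately show ?thesis by (rule Lim_transform_eventually[rotated])
qed

lemma small_steps_hit_window:
  fixes P :: "nat \<Rightarrow> real"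
  assumes "y \<le> P 0" and "\<exists>N. P N < y + \<epsilon>" and steps: "\<And>n. P n - \<epsilon> < P (Suc n)"
  shows "\<exists>N. \<bar>P N - y\<bar> < \<epsilon>"
proof -
  define N where "N = (LEAST N. P N < y + \<epsilon>)"
  have "P N < y + \<epsilon>" unfolding N_def using assms(2) by (rule LeastI_ex)
  moreover have "y \<le> P N"
  proof (cases N)
    case (Suc m)
    then have "\<not> P m < y + \<epsilon>" unfolding N_def by (metis Suc_n_not_le_n Least_le)
    then show ?thesis using steps[of m] unfolding Suc by linarith
  qed (use assms(1) \<open>P N < y + \<epsilon>\<close> in simp)
  ultimately show ?thesis by (intro exI[of _ N]) simp
qed
lemma prime_products_dense:
  fixes y \<epsilon> :: real
  assumes "0 \<le> y" "y \<le> 1" "\<epsilon> > 0"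
  shows "\<exists>Q. finite Q \<and> (\<forall>q\<in>Q. prime q) \<and> \<bar>(\<Prod>q\<in>Q. 1 - 1 / real q) - y\<bar> < \<epsilon>"
proof -
  obtain K :: nat where K: "K > 0" "inverse (real K) < \<epsilon>"
    using ex_inverse_of_nat_less[OF \<open>\<epsilon> > 0\<close>] by blast
  define P where "P N = (\<Prod>p | prime p \<and> K < p \<and> p \<le> N. 1 - 1 / real p)" for N
  have P_bounds: "0 \<le> P N" "P N \<le> 1" for N
    unfolding P_def using one_minus_inverse_prime_bounds
    by (auto intro!: prod_nonneg prod_le_1 simp: less_imp_le)
  have "P N - \<epsilon> < P (Suc N)" for N
  proof (cases "prime (Suc N) \<and> K < Suc N")
    case True
    then have "{p. prime p \<and> K < p \<and> p \<le> Suc N} = insert (Suc N) {p. prime p \<and> K < p \<and> p \<le> N}"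
      by (auto simp: le_Suc_eq)
    then have "P (Suc N) = P N - P N / real (Suc N)"
      unfolding P_def by (simp add: algebra_simps)
    moreover have "P N / real (Suc N) \<le> 1 / real K"
      using P_bounds[of N] True K by (intro frac_le) auto
    ultimately show ?thesis using K by (simp add: divide_inverse)
  next
    case False
    then have "{p. prime p \<and> K < p \<and> p \<le> Suc N} = {p. prime p \<and> K < p \<and> p \<le> N}"
      by (auto simp: le_Suc_eq)
    then show ?thesis using \<open>\<epsilon> > 0\<close> unfolding P_def by simp
  qed
  moreover have "y \<le> P 0" unfolding P_def using assms by simp
  moreover have "\<exists>N. P N < y + \<epsilon>"
  proof -
    have "\<forall>\<^sub>F N in sequentially. P N < y + \<epsilon>"
      using prod_primes_between_tendsto_0[of K] assms unfolding P_def by (intro order_tendstoD(2)) auto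
    then show ?thesis by (simp add: eventually_sequentially) (meson order_refl)
  qed
  ultimately obtain N where "\<bar>P N - y\<bar> < \<epsilon>" using small_steps_hit_window by blast
  then show ?thesis unfolding P_def by (intro exI[of _ "{p. prime p \<and> K < p \<and> p \<le> N}"]) auto
qed

theorem theorem1p7:
  shows "\<forall>x\<in>{0..1::real}. \<forall>\<epsilon>>0. \<exists>\<delta>.
           (\<exists>f\<in>classF. has_density (f_practical f) \<delta>) \<and> \<bar>\<delta> - x\<bar> < \<epsilon>"
proof (intro ballI allI impI)
  fix x \<epsilon> :: real
  assume "x \<in> {0..1}" "\<epsilon> > 0"
  then obtain Q where Q: "finite Q" "\<forall>q\<in>Q. prime q" "\<bar>(\<Prod>q\<in>Q. 1 - 1 / real q) - (1 - x)\<bar> < \<epsilon>"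
    using prime_products_dense[of "1 - x" \<epsilon>] by auto
  have "has_density (f_practical (pow3_outside Q)) (1 - (\<Prod>q\<in>Q. 1 - 1 / real q))"
    using Q(1,2) by (rule has_density_f_practical_pow3_outside)
  moreover have "\<bar>(1 - (\<Prod>q\<in>Q. 1 - 1 / real q)) - x\<bar> < \<epsilon>" using Q(3) by linarith
  ultimately show "\<exists>\<delta>. (\<exists>f\<in>classF. has_density (f_practical f) \<delta>) \<and> \<bar>\<delta> - x\<bar> < \<epsilon>"
    using pow3_outside_in_classF by blast
qed

end
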